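(* Let $\Phi:\mathbb{R}^N\to\mathbb{R}^M$ and $L:\mathbb{R}^P\to\mathbb{R}^N$ be linear operators, let $\|\cdot\|_A$ be a norm on $\mathbb{R}^P$ with dual norm $\|\cdot\|_A^*$, and set $R(x)=\|L^*x\|_A$. Let $x_0\in\mathbb{R}^N$, assume $\|\cdot\|_A$ is decomposable at $u_0=L^*x_0$ with associated subspace $T_0$ and vector $e_0\in T_0$, and let $S_0=T_0^\perp$. Assume $\Phi$ is injective on $\ker(L_{S_0}^* )$ and that $\mathrm{IC}_{\bar u,\bar z}(T_0,e_0)<1$, where $(\bar u,\bar z)$ is a minimizer of $\mathrm{IC}_{u,z}(T_0,e_0)$ over all $u\in\ker(L_{S_0})$ and all $z\in\mathbb{R}^M$ with $\Phi^*z\in\mathrm{Im}(L_{S_0})$. Set $\eta=\Phi\,\Xi\,L_{T_0}e_0+\bar z$. Then there exists $\alpha\in\partial\|\cdot\|_A(L^*x_0)$ with $\Phi^*\eta=L\alpha$ and $\|\alpha_{S_0}\|_A^*<1$. Moreover, there exist constants $C_1>0$, $C_2>0$, independent of $\eta$ and $\alpha$, such that for every $\varepsilon>0$, every $w\in\mathbb{R}^M$ with $\|w\|_2\le\varepsilon$, $y=\Phi x_0+w$, every $c>0$ and $\lambda=c\varepsilon$, any minimizer $x^\star$ of $\min_{x\in\mathbb{R}^N}\tfrac12\|y-\Phi x\|_2^2+\lambda R(x)$ satisfies $$\|x^\star-x_0\|_2\le C\varepsilon,\qquad C=C_1\bigl(2+c\|\eta\|_2\bigr)+C_2\frac{(1+c\|\eta\|_2/2)^2}{c\,\bigl(1-\mathrm{IC}_{\bar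 u,\bar z}(T_0,e_0)\bigr)}.$$
   Context: For a subspace $V\subset\mathbb{R}^P$, $P_V$ denotes the orthogonal projector onto $V$, and $L_V=LP_V$, $L_V^*=P_VL^*$, $\alpha_V=P_V\alpha$ for $\alpha\in\mathbb{R}^P$. A norm $\|\cdot\|_A$ on $\mathbb{R}^P$ is decomposable at $u\in\mathbb{R}^P$ if (i) there exist a subspace $T\subset\mathbb{R}^P$ and a vector $e\in T$ such that $\partial\|\cdot\|_A(u)=\{\alpha\in\mathbb{R}^P:\ \alpha_T=e,\ \|\alpha_{T^\perp}\|_A^*\le 1\}$, and (ii) for every $z\in T^\perp$, $\|z\|_A=\sup\{\langle v,z\rangle: v\in T^\perp,\ \|v\|_A^*\le 1\}$. Irrepresentability criterion: for a subspace $T\subset\mathbb{R}^P$, $e\in\mathbb{R}^P$, $S=T^\perp$, with $\Phi$ injective on $\ker(L_S^* )$, define $\Xi:\mathbb{R}^N\to\ker(L_S^* )$ by $\Xi h=\operatorname{argmin}_{x\in\ker(L_S^* )}\tfrac12\|\Phi x\|_2^2-\langle h,x\rangle$, define $\Gamma=(L_S)^+(\Phi^*\Phi\,\Xi-\mathrm{Id})L_T$ where $M^+$ is the Moore–Penrose pseudoinverse, and for $u\in\ker(L_S)$ and $z\in\mathbb{R}^M$ with $\Phi^*z\in\mathrm{Im}(L_S)$ set $\mathrm{IC}_{u,z}(T,e)=\|\Gamma e+u_S+(L_S)^+\Phi^*z\|_A^*$. *)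

theory Defs
  imports "HOL-Analysis.Analysis"
begin

definition is_norm :: "('a::real_vector \<Rightarrow> real) \<Rightarrow> bool" where
  "is_norm nA \<longleftrightarrow> (\<forall>x. nA x \<ge> 0) \<and> (\<forall>x. nA x = 0 \<longleftrightarrow> x = 0)
     \<and> (\<forall>c x. nA (scaleR c x) = \<bar>c\<bar> * nA x) \<and> (\<forall>x y. nA (x + y) \<le> nA x + nA y)"

definition dual_norm :: "('a::real_inner \<Rightarrow> real) \<Rightarrow> 'a \<Rightarrow> real" where
  "dual_norm nA \<alpha> = Sup {inner \<alpha> x | x. nA x \<le> 1}"

definition subdiff :: "('a::real_inner \<Rightarrow> real) \<Rightarrow> 'a \<Rightarrow> 'a set" where
  "subdiff f u = {\<alpha>. \<forall>v. f v \<ge> f u + inner \<alpha> (v - u)}"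

definition proj :: "'a::real_inner set \<Rightarrow> 'a \<Rightarrow> 'a" where
  "proj V x = (THE v. v \<in> V \<and> (\<forall>w\<in>V. inner (x - v) w = 0))"

definition ker :: "('a::real_vector \<Rightarrow> 'b::real_vector) \<Rightarrow> 'a set" where
  "ker f = {x. f x = 0}"

definition pinv :: "('a::euclidean_space \<Rightarrow> 'b::euclidean_space) \<Rightarrow> 'b \<Rightarrow> 'a" where
  "pinv f y = (THE x. x \<in> orthogonal_comp (ker f) \<and> f x = proj (range f) y)"

definition decomposable_at :: "('a::euclidean_space \<Rightarrow> real) \<Rightarrow> 'a \<Rightarrow> 'a set \<Rightarrow> 'a \<Rightarrow> bool" where
  "decomposable_at nA u T e \<longleftrightarrow> subspace T \<and> e \<in> T \<and>
     subdiff nA u = {\<alpha>. proj T \<alpha> = e \<and> dual_norm nA (proj (orthogonal_comp T) \<alpha>) \<le> 1} \<and>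
     (\<forall>z\<in>orthogonal_comp T.
        nA z = Sup {inner v z | v. v \<in> orthogonal_comp T \<and> dual_norm nA v \<le> 1})"

definition Xi :: "('n::euclidean_space \<Rightarrow> 'm::euclidean_space) \<Rightarrow> ('p::euclidean_space \<Rightarrow> 'n)
                  \<Rightarrow> 'p set \<Rightarrow> 'n \<Rightarrow> 'n" where
  "Xi \<Phi> L S h = (THE x. x \<in> ker (\<lambda>x. proj S (adjoint L x)) \<and>
      (\<forall>x'\<in>ker (\<lambda>x. proj S (adjoint L x)).
          (1/2) * (norm (\<Phi> x))\<^sup>2 - inner h x \<le> (1/2) * (norm (\<Phi> x'))\<^sup>2 - inner h x'))"

definition Gamma :: "('n::euclidean_space \<Rightarrow> 'm::euclidean_space) \<Rightarrow> ('p::euclidean_space \<Rightarrow> 'n)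
                  \<Rightarrow> 'p set \<Rightarrow> 'p \<Rightarrow> 'p" where
  "Gamma \<Phi> L T v = (let S = orthogonal_comp T in
      pinv (\<lambda>a. L (proj S a))
        (adjoint \<Phi> (\<Phi> (Xi \<Phi> L S (L (proj T v)))) - L (proj T v)))"

definition IC :: "('p::euclidean_space \<Rightarrow> real) \<Rightarrow> ('n::euclidean_space \<Rightarrow> 'm::euclidean_space)
                  \<Rightarrow> ('p \<Rightarrow> 'n) \<Rightarrow> 'p \<Rightarrow> 'm \<Rightarrow> 'p set \<Rightarrow> 'p \<Rightarrow> real" where
  "IC nA \<Phi> L u z T e = (let S = orthogonal_comp T in
      dual_norm nA (Gamma \<Phi> L T e + proj S u + pinv (\<lambda>a. L (proj S a)) (adjoint \<Phi> z)))"

end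

theory Submission
  imports Defs
begin

text \<open>
  Decomposability turns the irrepresentability condition into a dual certificate.
  With s = Gamma e0 + P_S ubar + (L_S)^+ Phi^* zbar one has s in S0, so alpha = e0 + s is a
  subgradient of the norm at L^* x0 with dual norm of alpha_S equal to IC < 1, and
  L alpha = Phi^* eta: Xi solves the normal equations on ker(L_S^*), and (L_S)^+ inverts L_S on
  its range, which is the orthogonal complement of ker(L_S^*).
  Decomposability also yields the strengthened subgradient inequality
  R x >= R x0 + <Phi^* eta, x - x0> + (1 - IC) |P_S L^* x|_A.
  Comparing the objective at the minimiser and at x0 bounds both the residual Phi (x* - x0) and
  |P_S L^* x*|_A by multiples of epsilon, and injectivity of Phi on ker(P_S L^*) turns these two
  bounds into a bound on x* - x0.
\<close>

lemma proj_unique: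
  fixes V :: "'a::euclidean_space set"
  assumes "subspace V"
  shows "\<exists>!v. v \<in> V \<and> (\<forall>w\<in>V. inner (x - v) w = 0)"
proof -
  obtain a b where ab: "x = a + b" "a \<in> V" "b \<in> orthogonal_comp V"
    using subspace_sum_orthogonal_comp[OF assms] set_plus_elim by (metis UNIV_I)
  have a: "a \<in> V \<and> (\<forall>w\<in>V. inner (x - a) w = 0)"
    using ab by (auto simp: orthogonal_comp_def orthogonal_def inner_commute)
  show ?thesis
  proof (rule ex1I[of _ a])
    fix v assume v: "v \<in> V \<and> (\<forall>w\<in>V. inner (x - v) w = 0)"
    have "a - v \<in> V" using v ab assms by (simp add: subspace_diff)
    then have "inner (x - v) (a - v) - inner (x - a) (a - v) = 0" using v a by auto
    then have "inner (a - v) (a - v) = 0" by (simp add: inner_diff_left)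
    then show "v = a" by simp
  qed (fact a)
qed

lemma proj_in: "subspace V \<Longrightarrow> proj V x \<in> (V :: 'a::euclidean_space set)"
  unfolding proj_def using theI'[OF proj_unique] by blast

lemma proj_orthogonal:
  "subspace V \<Longrightarrow> w \<in> V \<Longrightarrow> inner (x - proj V x) w = 0" for V :: "'a::euclidean_space set"
  unfolding proj_def using theI'[OF proj_unique] by blast

lemma proj_eqI:
  fixes V :: "'a::euclidean_space set"
  assumes "subspace V" "v \<in> V" "\<And>w. w \<in> V \<Longrightarrow> inner (x - v) w = 0"
  shows "proj V x = v"
  unfolding proj_def by (rule the1_equality[OF proj_unique[OF assms(1)]]) (use assms in auto)

lemma proj_eq_self: "subspace V \<Longrightarrow> x \<in> V \<Longrightarrow> proj V x = x" for V :: "'a::euclidean_space set"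
  by (rule proj_eqI) auto

lemma proj_orthogonal_comp:
  fixes V :: "'a::euclidean_space set"
  assumes "subspace V"
  shows "proj (orthogonal_comp V) x = x - proj V x"
proof (rule proj_eqI[OF subspace_orthogonal_comp])
  show "x - proj V x \<in> orthogonal_comp V"
    using proj_orthogonal[OF assms] by (simp add: orthogonal_comp_def orthogonal_def inner_commute)
  show "inner (x - (x - proj V x)) w = 0" if "w \<in> orthogonal_comp V" for w
    using proj_in[OF assms] that by (simp add: orthogonal_comp_def orthogonal_def)
qed

lemma proj_add_orthogonal_comp:
  fixes V :: "'a::euclidean_space set"
  assumes "subspace V" "e \<in> V" "v \<in> orthogonal_comp V"
  shows "proj V (e + v) = e" and "proj (orthogonal_comp V) (e + v) = v"
proof -
  show "proj V (e + v) = e"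
    using assms by (intro proj_eqI) (auto simp: orthogonal_comp_def orthogonal_def inner_commute)
  then show "proj (orthogonal_comp V) (e + v) = v"
    by (simp add: proj_orthogonal_comp[OF assms(1)])
qed

lemma proj_self_adjoint:
  fixes V :: "'a::euclidean_space set"
  assumes V: "subspace V"
  shows "inner (proj V x) y = inner x (proj V y)"
proof -
  have "inner (proj V x) (y - proj V y) = 0"
    using proj_orthogonal[OF V proj_in[OF V], of y x] by (simp add: inner_commute)
  moreover have "inner (x - proj V x) (proj V y) = 0" by (rule proj_orthogonal[OF V proj_in[OF V]])
  ultimately show ?thesis by (simp add: inner_diff_left inner_diff_right)
qed

lemma linear_proj:
  fixes V :: "'a::euclidean_space set"
  assumes V: "subspace V"
  shows "linear (proj V)"
proof (rule linearI)
  show "proj V (x + y) = proj V x + proj V y" for x y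
  proof (rule proj_eqI[OF V])
    show "proj V x + proj V y \<in> V" using proj_in[OF V] V by (simp add: subspace_add)
    show "inner (x + y - (proj V x + proj V y)) w = 0" if "w \<in> V" for w
      using proj_orthogonal[OF V that, of x] proj_orthogonal[OF V that, of y]
      by (simp add: inner_diff_left inner_add_left)
  qed
  show "proj V (c *\<^sub>R x) = c *\<^sub>R proj V x" for c x
  proof (rule proj_eqI[OF V])
    show "c *\<^sub>R proj V x \<in> V" using proj_in[OF V] V by (simp add: subspace_scale)
    show "inner (c *\<^sub>R x - c *\<^sub>R proj V x) w = 0" if "w \<in> V" for w
      using proj_orthogonal[OF V that, of x] by (simp add: inner_diff_left)
  qed
qed

lemma subspace_ker: "linear f \<Longrightarrow> subspace (ker f)"
  unfolding ker_def by (rule real_vector.linear_subspace_kernel)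

lemma orthogonal_comp_ker_adjoint:
  fixes f :: "'a::euclidean_space \<Rightarrow> 'b::euclidean_space"
  assumes "linear f"
  shows "orthogonal_comp (ker (adjoint f)) = range f"
proof -
  have "ker (adjoint f) = orthogonal_comp (range f)"
    using ker_orthogonal_comp_adjoint[OF adjoint_linear[OF assms]]
    by (simp add: adjoint_adjoint[OF assms] ker_def vimage_def)
  then show ?thesis
    by (simp add: orthogonal_comp_self linear_subspace_image[OF assms subspace_UNIV])
qed

lemma adjoint_compose_proj:
  fixes L :: "'p::euclidean_space \<Rightarrow> 'n::euclidean_space"
  assumes "linear L" "subspace S"
  shows "adjoint (\<lambda>a. L (proj S a)) = (\<lambda>x. proj S (adjoint L x))"
proof (rule adjoint_unique, intro allI)
  fix x y
  have "inner (L (proj S x)) y = inner (proj S x) (adjoint L y)" by (simp add: adjoint_works[OF assms(1)])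
  also have "\<dots> = inner x (proj S (adjoint L y))" by (rule proj_self_adjoint[OF assms(2)])
  finally show "inner (L (proj S x)) y = inner x (proj S (adjoint L y))" .
qed

lemma pinv_characterization:
  fixes f :: "'p::euclidean_space \<Rightarrow> 'n::euclidean_space"
  assumes f: "linear f"
  shows "pinv f y \<in> orthogonal_comp (ker f) \<and> f (pinv f y) = proj (range f) y"
  unfolding pinv_def
proof (rule theI')
  have R: "subspace (range f)" by (rule linear_subspace_image[OF f subspace_UNIV])
  have K: "subspace (ker f)" by (rule subspace_ker[OF f])
  obtain a where a: "proj (range f) y = f a" using proj_in[OF R] by blast
  define x0 where "x0 = proj (orthogonal_comp (ker f)) a"
  have "f (proj (ker f) a) = 0" using proj_in[OF K] by (simp add: ker_def)
  then have "f x0 = proj (range f) y"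
    by (simp add: x0_def proj_orthogonal_comp[OF K] a linear_diff[OF f])
  moreover have "x0 \<in> orthogonal_comp (ker f)"
    unfolding x0_def by (rule proj_in[OF subspace_orthogonal_comp])
  ultimately have x0: "x0 \<in> orthogonal_comp (ker f) \<and> f x0 = proj (range f) y" by blast
  show "\<exists>!x. x \<in> orthogonal_comp (ker f) \<and> f x = proj (range f) y"
  proof (rule ex1I[of _ x0])
    fix x assume x: "x \<in> orthogonal_comp (ker f) \<and> f x = proj (range f) y"
    then have "x - x0 \<in> ker f \<inter> orthogonal_comp (ker f)"
      using x0 by (simp add: ker_def linear_diff[OF f] subspace_diff[OF subspace_orthogonal_comp])
    then show "x = x0" using orthogonal_Int_0[OF K] by auto
  qed (fact x0)
qed

lemma pinv_right_inverse:
  fixes f :: "'p::euclidean_space \<Rightarrow> 'n::euclidean_space"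
  assumes f: "linear f" and y: "y \<in> range f"
  shows "f (pinv f y) = y"
  using pinv_characterization[OF f, of y] proj_eq_self[OF linear_subspace_image[OF f subspace_UNIV] y]
  by simp

lemma pinv_compose_proj_in:
  fixes L :: "'p::euclidean_space \<Rightarrow> 'n::euclidean_space"
  assumes L: "linear L" and S: "subspace S"
  shows "pinv (\<lambda>a. L (proj S a)) y \<in> S"
proof -
  have "orthogonal_comp S \<subseteq> ker (\<lambda>a. L (proj S a))"
    using proj_add_orthogonal_comp(1)[OF S subspace_0[OF S]] linear_0[OF L]
    by (auto simp: ker_def)
  then have "orthogonal_comp (ker (\<lambda>a. L (proj S a))) \<subseteq> S"
    using orthogonal_comp_anti_mono orthogonal_comp_self[OF S] by metis
  then show ?thesis
    using pinv_characterization[OF linear_compose[OF linear_proj[OF S] L, unfolded o_def]] by blast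
qed

context
  fixes nA :: "'a::euclidean_space \<Rightarrow> real"
  assumes N: "is_norm nA"
begin

lemma is_norm_ge_zero: "nA x \<ge> 0"
  and is_norm_eq_zero_iff: "nA x = 0 \<longleftrightarrow> x = 0"
  and is_norm_scaleR: "nA (c *\<^sub>R x) = \<bar>c\<bar> * nA x"
  and is_norm_triangle: "nA (x + y) \<le> nA x + nA y"
  using N by (simp_all add: is_norm_def)

lemma is_norm_zero: "nA 0 = 0"
  by (simp add: is_norm_eq_zero_iff)

lemma is_norm_pos: "x \<noteq> 0 \<Longrightarrow> nA x > 0"
  using is_norm_ge_zero[of x] is_norm_eq_zero_iff[of x] by (metis less_eq_real_def)

lemma is_norm_convex: "convex_on UNIV nA"
proof (rule convex_onI)
  fix t :: real and x y :: 'a assume "t > 0" "t < 1"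
  then show "nA ((1 - t) *\<^sub>R x + t *\<^sub>R y) \<le> (1 - t) * nA x + t * nA y"
    using is_norm_triangle[of "(1 - t) *\<^sub>R x" "t *\<^sub>R y"] by (simp add: is_norm_scaleR)
qed simp

lemma is_norm_lower_bound: "\<exists>m>0. \<forall>x. m * norm x \<le> nA x"
proof -
  have cont: "continuous_on (sphere 0 1) nA"
    by (rule continuous_on_subset[OF convex_on_continuous[OF open_UNIV is_norm_convex]]) simp
  obtain b :: 'a where "b \<in> Basis" using nonempty_Basis by blast
  then have "b \<in> sphere 0 1" by simp
  then have "sphere (0::'a) 1 \<noteq> {}" by blast
  from continuous_attains_inf[OF compact_sphere this cont]
  obtain x0 where x0: "x0 \<in> sphere 0 1" "\<And>y. y \<in> sphere 0 1 \<Longrightarrow> nA x0 \<le> nA y"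
    by blast
  have "x0 \<noteq> 0" using x0(1) by auto
  then have m: "nA x0 > 0" by (rule is_norm_pos)
  have "nA x0 * norm x \<le> nA x" for x
  proof (cases "x = 0")
    case False
    then have "nA x0 \<le> nA ((1 / norm x) *\<^sub>R x)" by (intro x0(2)) simp
    then show ?thesis using False by (simp add: is_norm_scaleR field_simps)
  qed (simp add: is_norm_zero)
  with m show ?thesis by blast
qed

lemma dual_norm_bdd_above: "bdd_above {inner \<alpha> x | x. nA x \<le> 1}"
proof -
  obtain m where m: "m > 0" "\<And>x. m * norm x \<le> nA x" using is_norm_lower_bound by blast
  have "inner \<alpha> x \<le> norm \<alpha> / m" if "nA x \<le> 1" for x
  proof -
    have "norm x \<le> 1 / m" using m(2)[of x] that m(1) by (simp add: field_simps)
    then have "norm \<alpha> * norm x \<le> norm \<alpha> / m" by (simp add: mult_left_mono divide_inverse)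
    then show ?thesis using norm_cauchy_schwarz[of \<alpha> x] by linarith
  qed
  then show ?thesis by (auto intro!: bdd_aboveI)
qed

lemma dual_norm_le:
  assumes "\<And>x. nA x \<le> 1 \<Longrightarrow> inner \<alpha> x \<le> b"
  shows "dual_norm nA \<alpha> \<le> b"
  unfolding dual_norm_def
proof (rule cSup_least)
  have "nA 0 \<le> 1" by (simp add: is_norm_zero)
  then show "{inner \<alpha> x | x. nA x \<le> 1} \<noteq> {}" by blast
qed (use assms in blast)

lemma dual_norm_upper: "nA x \<le> 1 \<Longrightarrow> inner \<alpha> x \<le> dual_norm nA \<alpha>"
  unfolding dual_norm_def by (rule cSup_upper[OF _ dual_norm_bdd_above]) auto

lemma dual_norm_zero: "dual_norm nA 0 = 0"
  using dual_norm_le[of 0 0] dual_norm_upper[of 0 0] by (simp add: is_norm_zero)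

lemma inner_le_dual_norm: "inner \<alpha> z \<le> dual_norm nA \<alpha> * nA z"
proof (cases "z = 0")
  case False
  then have p: "nA z > 0" by (rule is_norm_pos)
  have "inner \<alpha> ((1 / nA z) *\<^sub>R z) \<le> dual_norm nA \<alpha>"
    using p by (intro dual_norm_upper) (simp add: is_norm_scaleR)
  then show ?thesis using p by (simp add: field_simps)
qed (simp add: is_norm_zero)

lemma subdiff_inner_self:
  assumes "\<alpha> \<in> subdiff nA u"
  shows "inner \<alpha> u = nA u"
proof -
  have "nA u + inner \<alpha> (0 - u) \<le> nA 0" "nA u + inner \<alpha> (2 *\<^sub>R u - u) \<le> nA (2 *\<^sub>R u)"
    using assms unfolding subdiff_def by blast+
  moreover have "2 *\<^sub>R u - u = u" by (simp add: scaleR_2)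
  ultimately show ?thesis by (simp add: is_norm_zero is_norm_scaleR)
qed

lemma subdiff_inner_le:
  assumes "\<alpha> \<in> subdiff nA u"
  shows "inner \<alpha> w \<le> nA w"
proof -
  have "nA u + inner \<alpha> (w - u) \<le> nA w" using assms by (simp add: subdiff_def)
  then show ?thesis using subdiff_inner_self[OF assms] by (simp add: inner_diff_right)
qed

end

lemma decomposable_at_subdiffI:
  assumes "decomposable_at nA u T e" "v \<in> orthogonal_comp T" "dual_norm nA v \<le> 1"
  shows "e + v \<in> subdiff nA u"
  using assms proj_add_orthogonal_comp[of T e v] unfolding decomposable_at_def by auto

lemma decomposable_at_proj_orthogonal_comp:
  fixes nA :: "'a::euclidean_space \<Rightarrow> real"
  assumes N: "is_norm nA" and dec: "decomposable_at nA u T e"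
  shows "proj (orthogonal_comp T) u = 0"
proof (rule ccontr)
  let ?S = "orthogonal_comp T"
  have S: "subspace ?S" by (rule subspace_orthogonal_comp)
  define v where "v = proj ?S u"
  assume "proj ?S u \<noteq> 0"
  then have v0: "v \<noteq> 0" unfolding v_def .
  obtain m where m: "m > 0" "\<And>x. m * norm x \<le> nA x" using is_norm_lower_bound[OF N] by blast
  define t where "t = m / norm v"
  have t: "t > 0" using m v0 by (simp add: t_def)
  have tv: "t *\<^sub>R v \<in> ?S" unfolding v_def by (simp add: S subspace_scale proj_in)
  \<comment> \<open>e and e + t v are both subgradients at u, which forces inner v u = 0\<close>
  have "dual_norm nA (t *\<^sub>R v) \<le> 1"
  proof (rule dual_norm_le[OF N])
    fix x assume "nA x \<le> 1"
    have "inner (t *\<^sub>R v) x \<le> norm (t *\<^sub>R v) * norm x" by (rule norm_cauchy_schwarz)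
    also have "\<dots> = m * norm x" using v0 m by (simp add: t_def)
    also have "\<dots> \<le> 1" using m(2)[of x] \<open>nA x \<le> 1\<close> by simp
    finally show "inner (t *\<^sub>R v) x \<le> 1" .
  qed
  then have "e + t *\<^sub>R v \<in> subdiff nA u" by (rule decomposable_at_subdiffI[OF dec tv])
  moreover have "e + 0 \<in> subdiff nA u"
    by (rule decomposable_at_subdiffI[OF dec subspace_0[OF S]]) (simp add: dual_norm_zero[OF N])
  ultimately have "inner (e + t *\<^sub>R v) u = inner (e + 0) u"
    using subdiff_inner_self[OF N] by metis
  then have "inner v u = 0" using t by (simp add: inner_add_left)
  moreover have "inner v u = inner v v"
    using proj_self_adjoint[OF S, of v u] proj_eq_self[OF S proj_in[OF S]] by (simp add: v_def)
  ultimately show False using v0 by simp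
qed

lemma decomposable_at_norm_lower_bound:
  fixes nA :: "'a::euclidean_space \<Rightarrow> real"
  assumes N: "is_norm nA" and dec: "decomposable_at nA u T e" and s: "s \<in> orthogonal_comp T"
  shows "inner (e + s) x + (1 - dual_norm nA s) * nA (proj (orthogonal_comp T) x) \<le> nA x"
proof -
  let ?S = "orthogonal_comp T" and ?z = "proj (orthogonal_comp T) x"
  have S: "subspace ?S" by (rule subspace_orthogonal_comp)
  have on_S: "inner v x = inner v ?z" if "v \<in> ?S" for v
    using proj_self_adjoint[OF S, of v x] proj_eq_self[OF S that] by simp
  have "inner v ?z \<le> nA x - inner (e + s) x + dual_norm nA s * nA ?z"
    if "v \<in> ?S" "dual_norm nA v \<le> 1" for v
  proof -
    have "inner (e + v) x \<le> nA x"
      by (rule subdiff_inner_le[OF N decomposable_at_subdiffI[OF dec that]])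
    moreover have "inner s x \<le> dual_norm nA s * nA ?z"
      using inner_le_dual_norm[OF N, of s ?z] on_S[OF s] by simp
    ultimately show ?thesis using on_S[OF that(1)] by (simp add: inner_add_left)
  qed
  then have "Sup {inner v ?z | v. v \<in> ?S \<and> dual_norm nA v \<le> 1}
      \<le> nA x - inner (e + s) x + dual_norm nA s * nA ?z"
    using subspace_0[OF S] dual_norm_zero[OF N] by (intro cSup_least) auto
  moreover have "nA ?z = Sup {inner v ?z | v. v \<in> ?S \<and> dual_norm nA v \<le> 1}"
    using dec proj_in[OF S] unfolding decomposable_at_def by blast
  ultimately show ?thesis by (simp add: algebra_simps)
qed

lemma decomposable_at_source_condition:
  fixes L :: "'p::euclidean_space \<Rightarrow> 'n::euclidean_space" and nA :: "'p \<Rightarrow> real"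
  assumes L: "linear L" and N: "is_norm nA" and dec: "decomposable_at nA (adjoint L x0) T e"
    and s: "s \<in> orthogonal_comp T" "dual_norm nA s \<le> 1"
  shows "nA (adjoint L x0) + inner (L (e + s)) (x - x0)
      + (1 - dual_norm nA s) * nA (proj (orthogonal_comp T) (adjoint L x)) \<le> nA (adjoint L x)"
proof -
  have "inner (e + s) (adjoint L x0) = nA (adjoint L x0)"
    by (rule subdiff_inner_self[OF N decomposable_at_subdiffI[OF dec s]])
  moreover have "inner (L (e + s)) (x - x0) = inner (e + s) (adjoint L x) - inner (e + s) (adjoint L x0)"
    by (simp add: adjoint_works[OF L, symmetric] linear_diff[OF adjoint_linear[OF L]] inner_diff_right)
  ultimately show ?thesis
    using decomposable_at_norm_lower_bound[OF N dec s(1), of "adjoint L x"] by simp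
qed

lemma normal_equation_solvable:
  fixes \<Phi> :: "'n::euclidean_space \<Rightarrow> 'm::euclidean_space"
  assumes \<Phi>: "linear \<Phi>" and K: "subspace K" and inj: "inj_on \<Phi> K"
  shows "\<exists>x\<in>K. \<forall>y\<in>K. inner (adjoint \<Phi> (\<Phi> x) - h) y = 0"
proof -
  \<comment> \<open>G is self-adjoint with kernel the orthogonal complement of K, hence its range is K\<close>
  define G where "G x = proj K (adjoint \<Phi> (\<Phi> (proj K x)))" for x
  have "G = proj K \<circ> adjoint \<Phi> \<circ> \<Phi> \<circ> proj K" by (simp add: G_def fun_eq_iff)
  then have G: "linear G" by (simp add: linear_compose linear_proj[OF K] adjoint_linear \<Phi>)
  have G_inner: "inner x (G y) = inner (\<Phi> (proj K x)) (\<Phi> (proj K y))" for x y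
    by (simp add: G_def proj_self_adjoint[OF K, symmetric] adjoint_works[OF \<Phi>])
  have "adjoint G = G"
  proof (rule adjoint_unique, intro allI)
    fix x y
    have "inner (G x) y = inner (\<Phi> (proj K y)) (\<Phi> (proj K x))" by (simp add: inner_commute G_inner)
    also have "\<dots> = inner x (G y)" by (simp add: inner_commute G_inner)
    finally show "inner (G x) y = inner x (G y)" .
  qed
  moreover have "ker G = orthogonal_comp K"
  proof (intro set_eqI iffI)
    fix x assume "x \<in> ker G"
    then have "\<Phi> (proj K x) = 0" using G_inner[of x x] by (simp add: ker_def)
    then have "\<Phi> (proj K x) = \<Phi> 0" by (simp add: linear_0[OF \<Phi>])
    then have "proj K x = 0" by (rule inj_onD[OF inj _ proj_in[OF K] subspace_0[OF K]])
    then show "x \<in> orthogonal_comp K"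
      using proj_in[OF subspace_orthogonal_comp, of K x] by (simp add: proj_orthogonal_comp[OF K])
  next
    fix x assume "x \<in> orthogonal_comp K"
    then have "proj K x = 0" using proj_add_orthogonal_comp(1)[OF K subspace_0[OF K]] by simp
    then show "x \<in> ker G"
      by (simp add: G_def ker_def linear_0[OF \<Phi>] linear_0[OF adjoint_linear[OF \<Phi>]]
          linear_0[OF linear_proj[OF K]])
  qed
  ultimately have "range G = K"
    using orthogonal_comp_ker_adjoint[OF G] orthogonal_comp_self[OF K] by simp
  then obtain x where x: "G x = proj K h" using proj_in[OF K] by (metis rangeE)
  show ?thesis
  proof (intro bexI ballI)
    fix y assume y: "y \<in> K"
    have "inner (adjoint \<Phi> (\<Phi> (proj K x)) - h) y = inner (proj K (adjoint \<Phi> (\<Phi> (proj K x)) - h)) y"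
      using proj_self_adjoint[OF K, of _ y] proj_eq_self[OF K y] by simp
    also have "\<dots> = 0" using x by (simp add: G_def linear_diff[OF linear_proj[OF K]])
    finally show "inner (adjoint \<Phi> (\<Phi> (proj K x)) - h) y = 0" .
  qed (rule proj_in[OF K])
qed

lemma Xi_normal_equation:
  fixes \<Phi> :: "'n::euclidean_space \<Rightarrow> 'm::euclidean_space" and L :: "'p::euclidean_space \<Rightarrow> 'n"
  assumes \<Phi>: "linear \<Phi>" and L: "linear L" and S: "subspace S"
    and inj: "inj_on \<Phi> (ker (\<lambda>x. proj S (adjoint L x)))"
  shows "Xi \<Phi> L S h \<in> ker (\<lambda>x. proj S (adjoint L x))
    \<and> (\<forall>y\<in>ker (\<lambda>x. proj S (adjoint L x)). inner (adjoint \<Phi> (\<Phi> (Xi \<Phi> L S h)) - h) y = 0)"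
proof -
  define K where "K = ker (\<lambda>x. proj S (adjoint L x))"
  have K: "subspace K"
    unfolding K_def using subspace_ker linear_compose[OF adjoint_linear[OF L] linear_proj[OF S]]
    by (simp add: o_def)
  obtain x0 where x0: "x0 \<in> K" "\<And>y. y \<in> K \<Longrightarrow> inner (adjoint \<Phi> (\<Phi> x0) - h) y = 0"
    using normal_equation_solvable[OF \<Phi> K inj[folded K_def]] by blast
  define q where "q x = (1/2) * (norm (\<Phi> x))\<^sup>2 - inner h x" for x
  have q_expand: "q y = q x0 + (1/2) * (norm (\<Phi> (y - x0)))\<^sup>2" if "y \<in> K" for y
  proof -
    have "inner (adjoint \<Phi> (\<Phi> x0)) (y - x0) = inner h (y - x0)"
      using x0(2)[of "y - x0"] that x0(1) K by (simp add: subspace_diff inner_diff_left)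
    then have "inner (\<Phi> x0) (\<Phi> (y - x0)) = inner h (y - x0)"
      by (simp add: adjoint_clauses(2)[OF \<Phi>])
    moreover have "(norm (\<Phi> y))\<^sup>2
        = (norm (\<Phi> x0))\<^sup>2 + 2 * inner (\<Phi> x0) (\<Phi> (y - x0)) + (norm (\<Phi> (y - x0)))\<^sup>2"
      using dot_norm[of "\<Phi> x0" "\<Phi> (y - x0)"] by (simp add: linear_diff[OF \<Phi>])
    moreover have "inner h y = inner h x0 + inner h (y - x0)" by (simp add: inner_diff_right)
    ultimately show ?thesis unfolding q_def by (simp add: field_simps)
  qed
  have "Xi \<Phi> L S h = x0"
    unfolding Xi_def K_def[symmetric] q_def[symmetric]
  proof (rule the_equality)
    show "x0 \<in> K \<and> (\<forall>x'\<in>K. q x0 \<le> q x')"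
    proof (intro conjI ballI x0(1))
      fix x' assume "x' \<in> K"
      then show "q x0 \<le> q x'" using q_expand[of x'] zero_le_power2[of "norm (\<Phi> (x' - x0))"] by linarith
    qed
    fix x assume x: "x \<in> K \<and> (\<forall>x'\<in>K. q x \<le> q x')"
    then have "q x \<le> q x0" using x0(1) by blast
    then have "(norm (\<Phi> (x - x0)))\<^sup>2 \<le> 0" using q_expand[of x] x by linarith
    then have "\<Phi> x = \<Phi> x0" by (simp add: linear_diff[OF \<Phi>])
    then show "x = x0" using inj_onD[OF inj[folded K_def]] x x0(1) by blast
  qed
  with x0 show ?thesis unfolding K_def by simp
qed

lemma IC_dual_certificate:
  fixes \<Phi> :: "'n::euclidean_space \<Rightarrow> 'm::euclidean_space" and L :: "'p::euclidean_space \<Rightarrow> 'n"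
  assumes \<Phi>: "linear \<Phi>" and L: "linear L" and T: "subspace T" "e \<in> T"
    and inj: "inj_on \<Phi> (ker (\<lambda>x. proj (orthogonal_comp T) (adjoint L x)))"
    and u: "u \<in> ker (\<lambda>a. L (proj (orthogonal_comp T) a))"
    and z: "adjoint \<Phi> z \<in> range (\<lambda>a. L (proj (orthogonal_comp T) a))"
  obtains s where "s \<in> orthogonal_comp T" "dual_norm nA s = IC nA \<Phi> L u z T e"
    "L (e + s) = adjoint \<Phi> (\<Phi> (Xi \<Phi> L (orthogonal_comp T) (L (proj T e))) + z)"
proof -
  let ?S = "orthogonal_comp T"
  let ?LS = "\<lambda>a. L (proj ?S a)"
  have S: "subspace ?S" by (rule subspace_orthogonal_comp)
  have LS: "linear ?LS" using linear_compose[OF linear_proj[OF S] L] by (simp add: o_def)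
  define x where "x = Xi \<Phi> L ?S (L e)"
  have pe: "proj T e = e" by (rule proj_eq_self[OF T])
  have "adjoint \<Phi> (\<Phi> x) - L e \<in> orthogonal_comp (ker (\<lambda>x. proj ?S (adjoint L x)))"
    using Xi_normal_equation[OF \<Phi> L S inj, of "L e"]
    by (auto simp: x_def orthogonal_comp_def orthogonal_def inner_commute)
  then have range: "adjoint \<Phi> (\<Phi> x) - L e \<in> range ?LS"
    using orthogonal_comp_ker_adjoint[OF LS] by (simp add: adjoint_compose_proj[OF L S])
  define s where "s = pinv ?LS (adjoint \<Phi> (\<Phi> x) - L e) + proj ?S u + pinv ?LS (adjoint \<Phi> z)"
  show thesis
  proof (rule that)
    show sS: "s \<in> ?S"
      unfolding s_def using pinv_compose_proj_in[OF L S] proj_in[OF S]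
      by (intro subspace_add[OF S]) auto
    show "dual_norm nA s = IC nA \<Phi> L u z T e"
      by (simp add: IC_def Gamma_def Let_def s_def x_def pe)
    have "L s = ?LS s" using proj_eq_self[OF S sS] by simp
    also have "\<dots> = (adjoint \<Phi> (\<Phi> x) - L e) + adjoint \<Phi> z"
      using u pinv_right_inverse[OF LS range] pinv_right_inverse[OF LS z]
        proj_eq_self[OF S proj_in[OF S]]
      by (simp add: s_def linear_add[OF LS] ker_def)
    finally show "L (e + s) = adjoint \<Phi> (\<Phi> (Xi \<Phi> L ?S (L (proj T e))) + z)"
      by (simp add: x_def pe linear_add[OF L] linear_add[OF adjoint_linear[OF \<Phi>]])
  qed
qed

lemma objective_comparison_scalar_bounds:
  fixes \<epsilon> c n t Z q :: real
  assumes \<epsilon>: "\<epsilon> > 0" and c: "c > 0" and n: "n \<ge> 0" and t: "t \<ge> 0" and Z: "Z \<ge> 0" and q: "q > 0"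
    and H: "t\<^sup>2/2 + c*\<epsilon>*(q*Z - n*\<epsilon> - n*t) \<le> \<epsilon>\<^sup>2/2"
  shows "\<epsilon> + t \<le> 2 * (2 + c*n) * \<epsilon>" and "Z \<le> 2 * (1 + c*n/2)\<^sup>2 / (c*q) * \<epsilon>"
proof -
  define a where "a = c*n"
  have a: "a \<ge> 0" unfolding a_def using c n by simp
  have H': "t\<^sup>2/2 + c*\<epsilon>*q*Z - a*\<epsilon>*\<epsilon> - a*\<epsilon>*t \<le> \<epsilon>\<^sup>2/2"
    using H unfolding a_def by (simp add: algebra_simps)
  have "c*\<epsilon>*q*Z \<ge> 0" using c \<epsilon> q Z by simp
  then have "(t - (1 + 2*a)*\<epsilon>) * (t + \<epsilon>) \<le> 0"
    using H' by (simp add: power2_eq_square algebra_simps)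
  then have "t \<le> (1 + 2*a)*\<epsilon>" using t \<epsilon> by (simp add: mult_le_0_iff)
  then show "\<epsilon> + t \<le> 2 * (2 + c*n) * \<epsilon>" using a \<epsilon> unfolding a_def by (simp add: algebra_simps)
  \<comment> \<open>completing the square in t\<close>
  have "a*\<epsilon>*t - t\<^sup>2/2 \<le> a\<^sup>2*\<epsilon>\<^sup>2/2"
    using zero_le_power2[of "t - a*\<epsilon>"] by (simp add: power2_eq_square algebra_simps)
  then have "\<epsilon> * (c*q*Z) \<le> \<epsilon> * (\<epsilon>*(1 + a)\<^sup>2/2)"
    using H' by (simp add: power2_eq_square algebra_simps)
  then have "c*q*Z \<le> \<epsilon>*(1 + a)\<^sup>2/2" using \<epsilon> by simp
  also have "\<dots> \<le> \<epsilon>*(2 + a)\<^sup>2/2" using a \<epsilon> by (intro divide_right_mono mult_left_mono power_mono) simp_all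
  finally show "Z \<le> 2 * (1 + c*n/2)\<^sup>2 / (c*q) * \<epsilon>"
    using c q unfolding a_def by (simp add: field_simps power2_eq_square)
qed

lemma regularized_minimizer_bounds:
  fixes \<Phi> :: "'n::euclidean_space \<Rightarrow> 'm::euclidean_space" and R \<rho> :: "'n \<Rightarrow> real"
  assumes \<Phi>: "linear \<Phi>" and q: "q > 0" and \<rho>: "\<rho> xs \<ge> 0"
    and source: "R x0 + inner (adjoint \<Phi> \<eta>) (xs - x0) + q * \<rho> xs \<le> R xs"
    and \<epsilon>: "\<epsilon> > 0" and w: "norm w \<le> \<epsilon>" and c: "c > 0"
    and min: "(1/2) * (norm (\<Phi> x0 + w - \<Phi> xs))\<^sup>2 + (c*\<epsilon>) * R xs
      \<le> (1/2) * (norm w)\<^sup>2 + (c*\<epsilon>) * R x0"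
  shows "norm (\<Phi> (xs - x0)) \<le> 2 * (2 + c * norm \<eta>) * \<epsilon>"
    and "\<rho> xs \<le> 2 * (1 + c * norm \<eta> / 2)\<^sup>2 / (c * q) * \<epsilon>"
proof -
  define r where "r = \<Phi> x0 + w - \<Phi> xs"
  have \<Phi>d: "\<Phi> (xs - x0) = w - r" by (simp add: r_def linear_diff[OF \<Phi>])
  have "- (norm \<eta> * \<epsilon>) - norm \<eta> * norm r \<le> inner \<eta> w - inner \<eta> r"
    using Cauchy_Schwarz_ineq2[of \<eta> w] Cauchy_Schwarz_ineq2[of \<eta> r] w
      mult_left_mono[OF w norm_ge_zero[of \<eta>]] by linarith
  also have "\<dots> = inner \<eta> (\<Phi> (xs - x0))" by (simp add: \<Phi>d inner_diff_right)
  also have "\<dots> = inner (adjoint \<Phi> \<eta>) (xs - x0)" by (rule adjoint_clauses(2)[OF \<Phi>, symmetric])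
  finally have "c*\<epsilon>*(q * \<rho> xs - norm \<eta> * \<epsilon> - norm \<eta> * norm r) \<le> c*\<epsilon>*(R xs - R x0)"
    using source c \<epsilon> by (intro mult_left_mono) simp_all
  moreover have "(norm w)\<^sup>2 \<le> \<epsilon>\<^sup>2" using w by (simp add: power_mono)
  ultimately have "(norm r)\<^sup>2/2 + c*\<epsilon>*(q * \<rho> xs - norm \<eta> * \<epsilon> - norm \<eta> * norm r) \<le> \<epsilon>\<^sup>2/2"
    using min by (simp add: r_def algebra_simps)
  note bounds = objective_comparison_scalar_bounds[OF \<epsilon> c norm_ge_zero norm_ge_zero \<rho> q this]
  show "\<rho> xs \<le> 2 * (1 + c * norm \<eta> / 2)\<^sup>2 / (c * q) * \<epsilon>" by (fact bounds(2))
  have "norm (\<Phi> (xs - x0)) \<le> \<epsilon> + norm r" using w \<Phi>d norm_triangle_ineq4[of w r] by simp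
  with bounds(1) show "norm (\<Phi> (xs - x0)) \<le> 2 * (2 + c * norm \<eta>) * \<epsilon>" by simp
qed

lemma norm_le_split_ker:
  fixes \<Phi> :: "'n::euclidean_space \<Rightarrow> 'm::euclidean_space" and g :: "'n \<Rightarrow> 'p::euclidean_space"
  assumes \<Phi>: "linear \<Phi>" and g: "linear g" and inj: "inj_on \<Phi> (ker g)"
  obtains C1 C2 where "C1 > 0" "C2 > 0" "\<And>x. norm x \<le> C1 * norm (\<Phi> x) + C2 * norm (g x)"
proof -
  let ?K = "ker g"
  have K: "subspace ?K" by (rule subspace_ker[OF g])
  have "\<exists>e>0. \<forall>x\<in>orthogonal_comp ?K. norm (g x) \<ge> e * norm x"
    using orthogonal_Int_0[OF K] g
    by (intro injective_imp_isometric) (auto simp: closed_subspace subspace_orthogonal_comp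
        linear_conv_bounded_linear ker_def)
  then obtain e1 where e1: "e1 > 0" "\<And>x. x \<in> orthogonal_comp ?K \<Longrightarrow> e1 * norm x \<le> norm (g x)"
    by blast
  have "\<exists>e>0. \<forall>x\<in>?K. norm (\<Phi> x) \<ge> e * norm x"
    using inj linear_0[OF \<Phi>] subspace_0[OF K] \<Phi>
    by (intro injective_imp_isometric) (auto simp: closed_subspace K linear_conv_bounded_linear inj_on_def)
  then obtain e2 where e2: "e2 > 0" "\<And>x. x \<in> ?K \<Longrightarrow> e2 * norm x \<le> norm (\<Phi> x)"
    by blast
  obtain B where B: "B > 0" "\<And>x. norm (\<Phi> x) \<le> B * norm x" using linear_bounded_pos[OF \<Phi>] by blast
  show thesis
  proof (rule that)
    show "1 / e2 > 0" "(1 + B / e2) / e1 > 0" using e1 e2 B by (simp_all add: add_pos_pos)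
    fix x
    define xK where "xK = proj ?K x"
    define xP where "xP = x - xK"
    have xK: "xK \<in> ?K" unfolding xK_def by (rule proj_in[OF K])
    have xP: "xP \<in> orthogonal_comp ?K"
      unfolding xP_def xK_def by (metis proj_in proj_orthogonal_comp K subspace_orthogonal_comp)
    have "e1 * norm xP \<le> norm (g x)"
      using e1(2)[OF xP] xK by (simp add: xP_def ker_def linear_diff[OF g])
    then have nP: "norm xP \<le> norm (g x) / e1" using e1(1) by (simp add: field_simps)
    have "e2 * norm xK \<le> norm (\<Phi> x) + B * norm xP"
      using e2(2)[OF xK] norm_triangle_ineq4[of "\<Phi> x" "\<Phi> xP"] B(2)[of xP]
      by (simp add: xP_def linear_diff[OF \<Phi>])
    then have nK: "norm xK \<le> norm (\<Phi> x) / e2 + (B / e2) * norm xP" using e2(1) by (simp add: field_simps)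
    have "norm x \<le> norm xK + norm xP" using norm_triangle_ineq[of xK xP] by (simp add: xP_def)
    also have "\<dots> \<le> norm (\<Phi> x) / e2 + (1 + B / e2) * norm xP" using nK by (simp add: algebra_simps)
    also have "\<dots> \<le> norm (\<Phi> x) / e2 + (1 + B / e2) * (norm (g x) / e1)"
      using nP B(1) e2(1) by (intro add_left_mono mult_left_mono) simp_all
    finally show "norm x \<le> 1 / e2 * norm (\<Phi> x) + (1 + B / e2) / e1 * norm (g x)" by simp
  qed
qed

lemma norm_le_split_ker_is_norm:
  fixes \<Phi> :: "'n::euclidean_space \<Rightarrow> 'm::euclidean_space" and g :: "'n \<Rightarrow> 'p::euclidean_space"
    and N :: "'p \<Rightarrow> real"
  assumes \<Phi>: "linear \<Phi>" and g: "linear g" and inj: "inj_on \<Phi> (ker g)" and N: "is_norm N"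
  obtains C1 C2 where "C1 > 0" "C2 > 0" "\<And>x. norm x \<le> C1 * norm (\<Phi> x) + C2 * N (g x)"
proof -
  obtain C1 C2 where C: "C1 > 0" "C2 > 0" "\<And>x. norm x \<le> C1 * norm (\<Phi> x) + C2 * norm (g x)"
    using norm_le_split_ker[OF \<Phi> g inj] by blast
  obtain m where m: "m > 0" "\<And>a. m * norm a \<le> N a" using is_norm_lower_bound[OF N] by blast
  show thesis
  proof (rule that[of C1 "C2 / m"])
    show "C1 > 0" "C2 / m > 0" using C m by simp_all
    fix x
    have "norm (g x) \<le> N (g x) / m" using m by (simp add: pos_le_divide_eq mult.commute)
    then have "C2 * norm (g x) \<le> C2 / m * N (g x)"
      using mult_left_mono[OF _ less_imp_le[OF C(2)]] by fastforce
    then show "norm x \<le> C1 * norm (\<Phi> x) + C2 / m * N (g x)" using C(3)[of x] by linarith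
  qed
qed

lemma stability_from_decomposable_certificate:
  fixes \<Phi> :: "'n::euclidean_space \<Rightarrow> 'm::euclidean_space" and L :: "'p::euclidean_space \<Rightarrow> 'n"
    and nA :: "'p \<Rightarrow> real"
  assumes \<Phi>: "linear \<Phi>" and L: "linear L" and N: "is_norm nA"
    and dec: "decomposable_at nA (adjoint L x0) T e"
    and s: "s \<in> orthogonal_comp T" "dual_norm nA s < 1" and \<eta>: "L (e + s) = adjoint \<Phi> \<eta>"
    and split: "\<And>x. norm x \<le> C1 * norm (\<Phi> x) + C2 * nA (proj (orthogonal_comp T) (adjoint L x))"
    and C: "C1 \<ge> 0" "C2 \<ge> 0"
    and \<epsilon>: "\<epsilon> > 0" and w: "norm w \<le> \<epsilon>" and c: "c > 0"
    and min: "(1/2) * (norm (\<Phi> x0 + w - \<Phi> xs))\<^sup>2 + (c*\<epsilon>) * nA (adjoint L xs)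
      \<le> (1/2) * (norm w)\<^sup>2 + (c*\<epsilon>) * nA (adjoint L x0)"
  shows "norm (xs - x0) \<le> (2 * C1 * (2 + c * norm \<eta>)
    + 2 * C2 * (1 + c * norm \<eta> / 2)\<^sup>2 / (c * (1 - dual_norm nA s))) * \<epsilon>"
proof -
  let ?S = "orthogonal_comp T"
  define \<rho> where "\<rho> x = nA (proj ?S (adjoint L x))" for x
  have "nA (adjoint L x0) + inner (adjoint \<Phi> \<eta>) (xs - x0) + (1 - dual_norm nA s) * \<rho> xs
      \<le> nA (adjoint L xs)"
    using decomposable_at_source_condition[OF L N dec s(1)] s(2) \<eta> by (simp add: \<rho>_def)
  note bounds = regularized_minimizer_bounds[where \<rho> = \<rho> and R = "\<lambda>x. nA (adjoint L x)",
      OF \<Phi> _ _ this \<epsilon> w c min]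
  have "\<rho> (xs - x0) = \<rho> xs"
    using decomposable_at_proj_orthogonal_comp[OF N dec]
    by (simp add: \<rho>_def linear_diff[OF adjoint_linear[OF L]]
        linear_diff[OF linear_proj[OF subspace_orthogonal_comp]])
  then have "norm (xs - x0) \<le> C1 * norm (\<Phi> (xs - x0)) + C2 * \<rho> xs"
    using split[of "xs - x0"] by (simp add: \<rho>_def)
  also have "\<dots> \<le> C1 * (2 * (2 + c * norm \<eta>) * \<epsilon>)
      + C2 * (2 * (1 + c * norm \<eta> / 2)\<^sup>2 / (c * (1 - dual_norm nA s)) * \<epsilon>)"
    using bounds s(2) C is_norm_ge_zero[OF N] by (intro add_mono mult_left_mono) (simp_all add: \<rho>_def)
  finally show ?thesis by (simp add: algebra_simps)
qed

theorem corollary3: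
  fixes \<Phi> :: "'n::euclidean_space \<Rightarrow> 'm::euclidean_space"
    and L :: "'p::euclidean_space \<Rightarrow> 'n"
    and nA :: "'p \<Rightarrow> real"
    and x0 :: 'n and T0 :: "'p set" and e0 :: 'p
  assumes "linear \<Phi>" and "linear L" and "is_norm nA"
    and "decomposable_at nA (adjoint L x0) T0 e0"
    and "inj_on \<Phi> (ker (\<lambda>x. proj (orthogonal_comp T0) (adjoint L x)))"
  shows "\<exists>C1>0. \<exists>C2>0. \<forall>ubar zbar.
    (ubar \<in> ker (\<lambda>a. L (proj (orthogonal_comp T0) a))
     \<and> adjoint \<Phi> zbar \<in> range (\<lambda>a. L (proj (orthogonal_comp T0) a))
     \<and> (\<forall>u z. u \<in> ker (\<lambda>a. L (proj (orthogonal_comp T0) a))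
          \<longrightarrow> adjoint \<Phi> z \<in> range (\<lambda>a. L (proj (orthogonal_comp T0) a))
          \<longrightarrow> IC nA \<Phi> L ubar zbar T0 e0 \<le> IC nA \<Phi> L u z T0 e0)
     \<and> IC nA \<Phi> L ubar zbar T0 e0 < 1) \<longrightarrow>
    (let \<eta> = \<Phi> (Xi \<Phi> L (orthogonal_comp T0) (L (proj T0 e0))) + zbar in
      (\<exists>\<alpha>\<in>subdiff nA (adjoint L x0).
          adjoint \<Phi> \<eta> = L \<alpha> \<and> dual_norm nA (proj (orthogonal_comp T0) \<alpha>) < 1)
    \<and> (\<forall>\<epsilon>>0. \<forall>w. norm w \<le> \<epsilon> \<longrightarrow> (\<forall>c>0. \<forall>xs.
          (\<forall>x. (1/2) * (norm (\<Phi> x0 + w - \<Phi> xs))\<^sup>2 + (c * \<epsilon>) * nA (adjoint L xs)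
               \<le> (1/2) * (norm (\<Phi> x0 + w - \<Phi> x))\<^sup>2 + (c * \<epsilon>) * nA (adjoint L x))
          \<longrightarrow> norm (xs - x0) \<le>
              (C1 * (2 + c * norm \<eta>)
               + C2 * (1 + c * norm \<eta> / 2)\<^sup>2 / (c * (1 - IC nA \<Phi> L ubar zbar T0 e0))) * \<epsilon>)))"
proof -
  let ?S = "orthogonal_comp T0"
  have T0: "subspace T0" "e0 \<in> T0" using assms(4) by (simp_all add: decomposable_at_def)
  have "linear (\<lambda>x. proj ?S (adjoint L x))"
    using linear_compose[OF adjoint_linear[OF assms(2)] linear_proj[OF subspace_orthogonal_comp]]
    by (simp add: o_def)
  then obtain C1 C2 where C: "C1 > 0" "C2 > 0"
    and split: "\<And>x. norm x \<le> C1 * norm (\<Phi> x) + C2 * nA (proj ?S (adjoint L x))"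
    using norm_le_split_ker_is_norm[OF assms(1) _ assms(5,3)] by blast
  show ?thesis
  proof (rule exI[of _ "2 * C1"], intro conjI exI[of _ "2 * C2"] allI impI, goal_cases)
    case 1
    show ?case using C(1) by simp
  next
    case 2
    show ?case using C(2) by simp
  next
    case (3 ubar zbar)
    then have IC: "IC nA \<Phi> L ubar zbar T0 e0 < 1" by blast
    obtain s where s: "s \<in> ?S" "dual_norm nA s = IC nA \<Phi> L ubar zbar T0 e0"
      "L (e0 + s) = adjoint \<Phi> (\<Phi> (Xi \<Phi> L ?S (L (proj T0 e0))) + zbar)"
      using IC_dual_certificate[OF assms(1,2) T0 assms(5)] 3 by blast
    show ?case
      unfolding Let_def
    proof (intro conjI bexI[of _ "e0 + s"] allI impI, goal_cases)
      case 1
      show ?case using s(3) by simp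
    next
      case 2
      show ?case using s(2) IC proj_add_orthogonal_comp(2)[OF T0 s(1)] by simp
    next
      case 3
      show ?case using decomposable_at_subdiffI[OF assms(4) s(1)] s(2) IC by simp
    next
      case (4 \<epsilon> w c xs)
      have "(1/2) * (norm (\<Phi> x0 + w - \<Phi> xs))\<^sup>2 + (c * \<epsilon>) * nA (adjoint L xs)
          \<le> (1/2) * (norm w)\<^sup>2 + (c * \<epsilon>) * nA (adjoint L x0)"
        using "4"(4)[rule_format, of x0] by simp
      then show ?case
        using stability_from_decomposable_certificate[OF assms(1-4) s(1) _ s(3) split _ _ "4"(1-3)]
          s(2) IC C by simp
    qed
  qed
qed

end
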